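(* Suppose $\overline{\mathcal{G}}$ is compact with totally disconnected boundary $\partial\overline{\mathcal{G}}$. Let $E$ and $E^c=\partial\overline{\mathcal{G}}\setminus E$ be nonempty clopen subsets of $\partial\overline{\mathcal{G}}$. Then there is a function $\phi\in\mathcal{A}$ with $\phi(x)=1$ for all $x\in E$ and $\phi(x)=0$ for all $x\in E^c$.
   Context: $\mathcal{G}$ is a connected, locally finite metric graph with countable vertex set and countable edge set. Each edge has a positive length and is identified with an interval. $\mathcal{G}$ carries the geodesic distance, and $\overline{\mathcal{G}}$ is its metric completion. A designated set of vertices, containing all vertices of degree $1$, forms the boundary vertices. $\mathcal{G}_{int}$ is $\mathcal{G}$ minus the boundary vertices, and $\partial\overline{\mathcal{G}}=\overline{\mathcal{G}}\setminus\mathcal{G}_{int}$. Clopen means open and closed in $\partial\overline{\mathcal{G}}$. $\mathcal{A}$ is the set of functions $\phi:\overline{\mathcal{G}}\to\mathbb{R}$ such that: - $\phi$ is continuous on $\overline{\mathcal{G}}$; - $\phi$ is infinitely differentiable on the open edges; - $\phi'=0$ outside some finite collection of edges; - $\phi'=0$ in an open neighborhood of each vertex of $\mathcal{G}$. *)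

theory Defs
  imports "HOL-Analysis.Analysis"
begin

text \<open>A metric graph: vertex set V, edge set Ed, each edge e has an initial vertex s e,
  a terminal vertex t e and a length len e > 0; the open edge e is identified with
  the interval (0, len e). Loops and multiple edges are allowed.\<close>

definition metric_graph ::
  "'v set \<Rightarrow> 'e set \<Rightarrow> ('e \<Rightarrow> 'v) \<Rightarrow> ('e \<Rightarrow> 'v) \<Rightarrow> ('e \<Rightarrow> real) \<Rightarrow> bool" where
  "metric_graph V Ed s t len \<longleftrightarrow>
     countable V \<and> countable Ed \<and>
     (\<forall>e\<in>Ed. s e \<in> V \<and> t e \<in> V \<and> len e > 0) \<and>
     (\<forall>v\<in>V. finite {e\<in>Ed. s e = v \<or> t e = v})"

inductive walk :: "'e set \<Rightarrow> ('e \<Rightarrow> 'v) \<Rightarrow> ('e \<Rightarrow> 'v) \<Rightarrow> 'v \<Rightarrow> 'e list \<Rightarrow> 'v \<Rightarrow> bool"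
  for Ed s t where
  walk_Nil: "walk Ed s t u [] u"
| walk_fwd: "e \<in> Ed \<Longrightarrow> s e = u \<Longrightarrow> walk Ed s t (t e) es w \<Longrightarrow> walk Ed s t u (e # es) w"
| walk_bwd: "e \<in> Ed \<Longrightarrow> t e = u \<Longrightarrow> walk Ed s t (s e) es w \<Longrightarrow> walk Ed s t u (e # es) w"

definition graph_connected :: "'v set \<Rightarrow> 'e set \<Rightarrow> ('e \<Rightarrow> 'v) \<Rightarrow> ('e \<Rightarrow> 'v) \<Rightarrow> bool" where
  "graph_connected V Ed s t \<longleftrightarrow> (\<forall>u\<in>V. \<forall>w\<in>V. \<exists>es. walk Ed s t u es w)"

text \<open>Degree of a vertex (a loop contributes 2).\<close>
definition degree :: "'e set \<Rightarrow> ('e \<Rightarrow> 'v) \<Rightarrow> ('e \<Rightarrow> 'v) \<Rightarrow> 'v \<Rightarrow> nat" where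
  "degree Ed s t v = card {e\<in>Ed. s e = v} + card {e\<in>Ed. t e = v}"

definition gpoints :: "'v set \<Rightarrow> 'e set \<Rightarrow> ('e \<Rightarrow> real) \<Rightarrow> ('v + 'e \<times> real) set" where
  "gpoints V Ed len = Inl ` V \<union> {Inr (e, x) | e x. e \<in> Ed \<and> 0 < x \<and> x < len e}"

definition vdist :: "'e set \<Rightarrow> ('e \<Rightarrow> 'v) \<Rightarrow> ('e \<Rightarrow> 'v) \<Rightarrow> ('e \<Rightarrow> real) \<Rightarrow> 'v \<Rightarrow> 'v \<Rightarrow> real" where
  "vdist Ed s t len u w = Inf {sum_list (map len es) | es. walk Ed s t u es w}"

text \<open>The vertices through which a point can be left, with the distance to them along its edge.\<close>
definition exits :: "('e \<Rightarrow> 'v) \<Rightarrow> ('e \<Rightarrow> 'v) \<Rightarrow> ('e \<Rightarrow> real) \<Rightarrow> 'v + 'e \<times> real \<Rightarrow> ('v \<times> real) set" where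
  "exits s t len p = (case p of Inl v \<Rightarrow> {(v, 0)}
                        | Inr (e, x) \<Rightarrow> {(s e, x), (t e, len e - x)})"

text \<open>Geodesic distance on the metric graph: a shortest path either stays inside one edge,
  or leaves the first point through an endpoint of its edge, runs along a walk, and enters
  the second point through an endpoint of its edge.\<close>
definition gdist :: "'e set \<Rightarrow> ('e \<Rightarrow> 'v) \<Rightarrow> ('e \<Rightarrow> 'v) \<Rightarrow> ('e \<Rightarrow> real) \<Rightarrow>
    'v + 'e \<times> real \<Rightarrow> 'v + 'e \<times> real \<Rightarrow> real" where
  "gdist Ed s t len p q =
     (let via = Inf {a + vdist Ed s t len u w + b | u a w b.
                       (u, a) \<in> exits s t len p \<and> (w, b) \<in> exits s t len q}
      in case (p, q) of
           (Inr (e, x), Inr (e', y)) \<Rightarrow> (if e = e' then min \<bar>x - y\<bar> via else via)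
         | _ \<Rightarrow> via)"

definition totally_disconnected :: "'a::topological_space set \<Rightarrow> bool" where
  "totally_disconnected S \<longleftrightarrow> (\<forall>C. C \<subseteq> S \<and> connected C \<longrightarrow> (\<exists>a. C \<subseteq> {a}))"

definition edge_fun :: "('x \<Rightarrow> real) \<Rightarrow> ('v + 'e \<times> real \<Rightarrow> 'x) \<Rightarrow> 'e \<Rightarrow> real \<Rightarrow> real" where
  "edge_fun \<phi> \<iota> e = (\<lambda>x. \<phi> (\<iota> (Inr (e, x))))"

definition class_A :: "'v set \<Rightarrow> 'e set \<Rightarrow> ('e \<Rightarrow> 'v) \<Rightarrow> ('e \<Rightarrow> 'v) \<Rightarrow> ('e \<Rightarrow> real) \<Rightarrow>
    ('v + 'e \<times> real \<Rightarrow> 'x::metric_space) \<Rightarrow> 'x set \<Rightarrow> ('x \<Rightarrow> real) \<Rightarrow> bool" where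
  "class_A V Ed s t len \<iota> Gbar \<phi> \<longleftrightarrow>
     continuous_on Gbar \<phi> \<and>
     (\<forall>e\<in>Ed. \<forall>k. \<forall>x\<in>{0<..<len e}. ((deriv ^^ k) (edge_fun \<phi> \<iota> e)) differentiable (at x)) \<and>
     (\<exists>F. finite F \<and> F \<subseteq> Ed \<and>
        (\<forall>e\<in>Ed - F. \<forall>x\<in>{0<..<len e}. deriv (edge_fun \<phi> \<iota> e) x = 0)) \<and>
     (\<forall>v\<in>V. \<exists>\<epsilon>>0. \<forall>e\<in>Ed. \<forall>x\<in>{0<..<len e}.
        gdist Ed s t len (Inl v) (Inr (e, x)) < \<epsilon> \<longrightarrow> deriv (edge_fun \<phi> \<iota> e) x = 0)"

end

theory Submission
  imports "HOL-Computational_Algebra.Polynomial" Defs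
begin

text \<open>Let \<open>g\<close> be a continuous function on the completion which is \<open>1\<close> on \<open>E\<close> and \<open>0\<close> on its
  complement in the boundary, and cut it at a level \<open>c \<in> (0, 1)\<close> that \<open>g\<close> attains at none of the
  countably many vertices. The level set \<open>{g = c}\<close> is compact and avoids the boundary and the
  vertices, so it lies in the interiors of edges, and a compact set of such points meets only
  finitely many edges. The indicator of \<open>{g > c}\<close> is locally constant away from the level set; on
  each of the finitely many crossing edges it is replaced by a smooth step between its values at
  the two end vertices, placed away from both ends. The result is \<open>1\<close> on \<open>E\<close>, \<open>0\<close> on its complement,
  and lies in \<open>class_A\<close>.\<close>

subsection \<open>Smooth functions on the real line\<close>

fun times_differentiable :: "nat \<Rightarrow> (real \<Rightarrow> real) \<Rightarrow> bool" where
  "times_differentiable 0 f = True"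
| "times_differentiable (Suc k) f =
     (\<exists>f'. (\<forall>x. (f has_real_derivative f' x) (at x)) \<and> times_differentiable k f')"

lemma times_differentiable_SucD: "times_differentiable (Suc k) f \<Longrightarrow> times_differentiable k f"
proof (induction k arbitrary: f)
  case 0 then show ?case by simp
next
  case (Suc k)
  then obtain f' where "\<forall>x. (f has_real_derivative f' x) (at x)" "times_differentiable (Suc k) f'"
    by auto
  with Suc.IH show ?case by auto
qed

lemma times_differentiable_const: "times_differentiable k (\<lambda>x. c)"
  by (induction k arbitrary: c) (auto intro!: exI[of _ "\<lambda>x. 0"])

lemma times_differentiable_add:
  "times_differentiable k f \<Longrightarrow> times_differentiable k g \<Longrightarrow> times_differentiable k (\<lambda>x. f x + g x)"
proof (induction k arbitrary: f g)
  case 0 then show ?case by simp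
next
  case (Suc k)
  then obtain f' g' where "\<forall>x. (f has_real_derivative f' x) (at x)" "times_differentiable k f'"
    "\<forall>x. (g has_real_derivative g' x) (at x)" "times_differentiable k g'" by auto
  with Suc.IH show ?case
    by (auto intro!: exI[of _ "\<lambda>x. f' x + g' x"] derivative_eq_intros)
qed

lemma times_differentiable_mult:
  "times_differentiable k f \<Longrightarrow> times_differentiable k g \<Longrightarrow> times_differentiable k (\<lambda>x. f x * g x)"
proof (induction k arbitrary: f g)
  case 0 then show ?case by simp
next
  case (Suc k)
  then obtain f' g' where d: "\<forall>x. (f has_real_derivative f' x) (at x)" "times_differentiable k f'"
    "\<forall>x. (g has_real_derivative g' x) (at x)" "times_differentiable k g'" by auto
  have "times_differentiable k f" "times_differentiable k g"
    using Suc.prems times_differentiable_SucD by auto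
  then have "times_differentiable k (\<lambda>x. f' x * g x + f x * g' x)"
    using Suc.IH d by (intro times_differentiable_add) auto
  with d show ?case
    by (auto intro!: exI[of _ "\<lambda>x. f' x * g x + f x * g' x"] derivative_eq_intros)
qed

lemma times_differentiable_inverse:
  "times_differentiable k f \<Longrightarrow> (\<And>x. f x > 0) \<Longrightarrow> times_differentiable k (\<lambda>x. inverse (f x))"
proof (induction k arbitrary: f)
  case 0 then show ?case by simp
next
  case (Suc k)
  then obtain f' where d: "\<forall>x. (f has_real_derivative f' x) (at x)" "times_differentiable k f'"
    by auto
  have "times_differentiable k f" using Suc.prems times_differentiable_SucD by auto
  then have "times_differentiable k (\<lambda>x. inverse (f x))" using Suc by auto
  then have "times_differentiable k (\<lambda>x. (-1) * f' x * (inverse (f x) * inverse (f x)))"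
    using d by (intro times_differentiable_mult times_differentiable_const) auto
  moreover have "((\<lambda>x. inverse (f x)) has_real_derivative
                   (-1) * f' x * (inverse (f x) * inverse (f x))) (at x)" for x
    using d Suc.prems(2)[of x]
    by (auto intro!: derivative_eq_intros simp: power2_eq_square field_simps)
  ultimately show ?case by (intro times_differentiable.simps(2)[THEN iffD2] exI conjI) auto
qed

lemma times_differentiable_affine:
  "times_differentiable k f \<Longrightarrow> times_differentiable k (\<lambda>x. f (a * x + b))"
proof (induction k arbitrary: f)
  case 0 then show ?case by simp
next
  case (Suc k)
  then obtain f' where d: "\<forall>x. (f has_real_derivative f' x) (at x)" "times_differentiable k f'"
    by auto
  have "times_differentiable k (\<lambda>x. a * f' (a * x + b))"
    using Suc.IH d by (intro times_differentiable_mult times_differentiable_const) auto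
  moreover have "((\<lambda>x. f (a * x + b)) has_real_derivative a * f' (a * x + b)) (at x)" for x
  proof -
    have "((\<lambda>x. a * x + b) has_real_derivative a) (at x)"
      by (auto intro!: derivative_eq_intros)
    from DERIV_chain2[OF d(1)[rule_format] this] show ?thesis by (simp add: mult.commute)
  qed
  ultimately show ?case by (intro times_differentiable.simps(2)[THEN iffD2] exI conjI) auto
qed

lemma times_differentiable_funpow_deriv:
  "times_differentiable (Suc k) f \<Longrightarrow> ((deriv ^^ k) f) differentiable (at x)"
proof (induction k arbitrary: f)
  case 0 then show ?case by (auto simp: real_differentiable_def)
next
  case (Suc k)
  then obtain f' where d: "\<forall>x. (f has_real_derivative f' x) (at x)" "times_differentiable (Suc k) f'"
    by auto
  have "deriv f = f'" using d(1) by (auto intro!: ext DERIV_imp_deriv)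
  then have "(deriv ^^ Suc k) f = (deriv ^^ k) f'" by (simp add: funpow_Suc_right del: funpow.simps)
  then show ?case using Suc.IH d by simp
qed

lemma times_differentiable_isCont: "times_differentiable (Suc k) f \<Longrightarrow> isCont f x"
  by (auto intro: DERIV_isCont)

lemma funpow_deriv_cong_open:
  assumes "open U" "\<And>y. y \<in> U \<Longrightarrow> f y = g y" "x \<in> U"
  shows "(deriv ^^ k) f x = (deriv ^^ k) g x"
  using assms(3)
proof (induction k arbitrary: x)
  case 0 then show ?case using assms by simp
next
  case (Suc k)
  have "eventually (\<lambda>y. (deriv ^^ k) f y = (deriv ^^ k) g y) (nhds x)"
    unfolding eventually_nhds using Suc assms(1) by blast
  then show ?case by (simp add: deriv_cong_ev)
qed

lemma funpow_deriv_differentiable_if_eq_on_open: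
  assumes "open U" "x \<in> U" "\<And>y. y \<in> U \<Longrightarrow> f y = g y" "\<And>k. times_differentiable k g"
  shows "(deriv ^^ k) f differentiable (at x)"
proof -
  obtain D where D: "((deriv ^^ k) g has_real_derivative D) (at x)"
    using times_differentiable_funpow_deriv assms(4) by (meson real_differentiable_def)
  have "((deriv ^^ k) f has_real_derivative D) (at x)"
    by (rule has_field_derivative_transform_within_open[OF D assms(1,2)])
       (use funpow_deriv_cong_open[OF assms(1,3)] in auto)
  then show ?thesis by (auto simp: real_differentiable_def)
qed

lemma deriv_eq_0_if_constant_on_open:
  assumes "open U" "x \<in> U" "\<And>y. y \<in> U \<Longrightarrow> f y = C"
  shows "deriv f x = 0"
  using funpow_deriv_cong_open[OF assms(1), of f "\<lambda>_. C" x 1] assms by simp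

text \<open>The functions \<open>expinv P\<close> are closed under differentiation; their flatness at \<open>0\<close> is
  \<open>poly_times_exp_neg_tendsto_0\<close> after the substitution \<open>y = 1 / t\<close>.\<close>

definition expinv :: "real poly \<Rightarrow> real \<Rightarrow> real" where
  "expinv P t = (if t > 0 then poly P (inverse t) * exp (- inverse t) else 0)"

definition expinv_deriv_poly :: "real poly \<Rightarrow> real poly" where
  "expinv_deriv_poly P = [:0, 0, 1:] * (P - pderiv P)"

lemma poly_times_exp_neg_tendsto_0: "((\<lambda>y. poly P y * exp (- y)) \<longlongrightarrow> (0::real)) at_top"
proof -
  have "((\<lambda>y. \<Sum>i\<le>Polynomial.degree P. coeff P i * (y ^ i / exp y))
          \<longlongrightarrow> (\<Sum>i\<le>Polynomial.degree P. coeff P i * 0)) at_top"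
    by (intro tendsto_intros tendsto_power_div_exp_0)
  moreover have "(\<lambda>y. \<Sum>i\<le>Polynomial.degree P. coeff P i * (y ^ i / exp y)) = (\<lambda>y. poly P y * exp (- y))"
    by (auto simp: poly_altdef sum_divide_distrib exp_minus field_simps)
  ultimately show ?thesis by simp
qed

lemma has_real_derivative_expinv_pos:
  assumes "t > 0"
  shows "(expinv P has_real_derivative expinv (expinv_deriv_poly P) t) (at t)"
proof -
  have "((\<lambda>t. poly P (inverse t) * exp (- inverse t)) has_real_derivative
        (poly (pderiv P) (inverse t) * (- inverse (t^2))) * exp (- inverse t)
         + poly P (inverse t) * (exp (- inverse t) * inverse (t^2))) (at t)"
    using assms
    by (auto intro!: derivative_eq_intros DERIV_chain2[of "poly P"] poly_DERIV
             simp: power2_eq_square field_simps)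
  moreover have "(poly (pderiv P) (inverse t) * (- inverse (t^2))) * exp (- inverse t)
         + poly P (inverse t) * (exp (- inverse t) * inverse (t^2)) = expinv (expinv_deriv_poly P) t"
    using assms by (simp add: expinv_def expinv_deriv_poly_def algebra_simps power2_eq_square)
  ultimately have "((\<lambda>t. poly P (inverse t) * exp (- inverse t)) has_real_derivative
                     expinv (expinv_deriv_poly P) t) (at t)"
    by simp
  then show ?thesis
    by (rule has_field_derivative_transform_within_open[of _ _ _ "{0<..}"])
       (use assms in \<open>auto simp: expinv_def\<close>)
qed

lemma has_real_derivative_expinv_neg:
  assumes "t < 0"
  shows "(expinv P has_real_derivative expinv (expinv_deriv_poly P) t) (at t)"
proof -
  have "(expinv P has_real_derivative 0) (at t)"
    by (rule has_field_derivative_transform_within_open[OF DERIV_const, of "{..<0}"])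
       (use assms in \<open>auto simp: expinv_def\<close>)
  then show ?thesis using assms by (simp add: expinv_def)
qed

lemma has_real_derivative_expinv_0: "(expinv P has_real_derivative expinv (expinv_deriv_poly P) 0) (at 0)"
proof -
  have "((\<lambda>h. (expinv P (0 + h) - expinv P 0) / h) \<longlongrightarrow> 0) (at 0)"
  proof (rule filterlim_split_at_real)
    show "((\<lambda>h. (expinv P (0 + h) - expinv P 0) / h) \<longlongrightarrow> 0) (at_left 0)"
      by (rule tendsto_eventually)
         (auto simp: expinv_def eventually_at_left_field intro: exI[of _ "-1"])
    have "eventually (\<lambda>y. poly (pCons 0 P) y * exp (- y) =
            (expinv P (0 + inverse y) - expinv P 0) / inverse y) at_top"
      using eventually_gt_at_top[of 0] by eventually_elim (auto simp: expinv_def field_simps)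
    with poly_times_exp_neg_tendsto_0
    have "((\<lambda>y. (expinv P (0 + inverse y) - expinv P 0) / inverse y) \<longlongrightarrow> 0) at_top"
      by (rule Lim_transform_eventually)
    then show "((\<lambda>h. (expinv P (0 + h) - expinv P 0) / h) \<longlongrightarrow> 0) (at_right 0)"
      by (simp add: filterlim_at_right_to_top)
  qed
  then show ?thesis by (simp add: DERIV_def expinv_def)
qed

lemma has_real_derivative_expinv:
  "(expinv P has_real_derivative expinv (expinv_deriv_poly P) t) (at t)"
  using has_real_derivative_expinv_pos has_real_derivative_expinv_neg has_real_derivative_expinv_0
  by (metis linorder_neqE_linordered_idom)

lemma times_differentiable_expinv: "times_differentiable k (expinv P)"
  by (induction k arbitrary: P) (auto intro: has_real_derivative_expinv)

definition smooth_step :: "real \<Rightarrow> real" where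
  "smooth_step t = expinv 1 t * inverse (expinv 1 t + expinv 1 (1 - t))"

lemma expinv_1_pos: "t > 0 \<Longrightarrow> expinv 1 t > 0"
  by (simp add: expinv_def)

lemma expinv_nonpos: "t \<le> 0 \<Longrightarrow> expinv P t = 0"
  by (simp add: expinv_def)

lemma times_differentiable_smooth_step: "times_differentiable k smooth_step"
proof -
  have den_pos: "expinv 1 t + expinv 1 ((-1) * t + 1) > 0" for t
    using expinv_1_pos[of t] expinv_1_pos[of "1 - t"] expinv_nonpos[of t 1] expinv_nonpos[of "1 - t" 1]
    by (cases "t > 0"; cases "1 - t > 0") auto
  have "times_differentiable k (\<lambda>t. expinv 1 t * inverse (expinv 1 t + expinv 1 ((-1) * t + 1)))"
    using den_pos
    by (intro times_differentiable_mult times_differentiable_inverse times_differentiable_add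
          times_differentiable_affine times_differentiable_expinv)
  then show ?thesis by (simp add: smooth_step_def[abs_def])
qed

lemma smooth_step_nonpos: "t \<le> 0 \<Longrightarrow> smooth_step t = 0"
  by (simp add: smooth_step_def expinv_nonpos)

lemma smooth_step_ge_1: "t \<ge> 1 \<Longrightarrow> smooth_step t = 1"
  using expinv_1_pos[of t] expinv_nonpos[of "1 - t" 1] by (simp add: smooth_step_def)

lemma closure_local_subset:
  assumes "y \<in> closure A" "closed K" "\<delta> > 0" "\<And>z. z \<in> A \<Longrightarrow> dist z y < \<delta> \<Longrightarrow> z \<in> K"
  shows "y \<in> K"
proof -
  have "y \<in> ball y \<delta> \<inter> closure A" using assms(1,3) by simp
  also have "\<dots> \<subseteq> closure (ball y \<delta> \<inter> A)" by (rule open_Int_closure_subset) simp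
  also have "\<dots> \<subseteq> K" using assms(2,4) by (intro closure_minimal) (auto simp: dist_commute)
  finally show ?thesis .
qed

lemma metric_separating_function:
  fixes S T :: "'a::metric_space set"
  assumes "closed S" "closed T" "S \<noteq> {}" "T \<noteq> {}" "S \<inter> T = {}"
  shows "\<exists>g :: 'a \<Rightarrow> real. continuous_on UNIV g \<and> (\<forall>y\<in>S. g y = 1) \<and> (\<forall>y\<in>T. g y = 0)"
proof -
  define g where "g y = infdist y T / (infdist y S + infdist y T)" for y
  have den: "infdist y S + infdist y T > 0" for y
  proof -
    have "\<not> (infdist y S = 0 \<and> infdist y T = 0)"
      using in_closed_iff_infdist_zero[OF assms(1,3)] in_closed_iff_infdist_zero[OF assms(2,4)] assms(5)
      by auto
    then show ?thesis using infdist_nonneg[of y S] infdist_nonneg[of y T] by linarith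
  qed
  have "continuous_on UNIV g"
    unfolding g_def[abs_def] using den by (intro continuous_intros) (metis less_irrefl)
  moreover have "g y = 1" if "y \<in> S" for y
    using that in_closed_iff_infdist_zero[OF assms(1,3)] den[of y] by (simp add: g_def)
  moreover have "g y = 0" if "y \<in> T" for y
    using that in_closed_iff_infdist_zero[OF assms(2,4)] by (simp add: g_def)
  ultimately show ?thesis by blast
qed

lemma real_interval_avoids_countable:
  fixes A :: "real set"
  assumes "countable A" "a < b"
  obtains c where "a < c" "c < b" "c \<notin> A"
  using uncountable_open_interval[of a b] countable_subset[OF _ assms(1)] assms(2)
  by (metis greaterThanLessThan_iff subsetI)

subsection \<open>Geodesic distance\<close>

lemma walk_edges: "walk Ed s t u es w \<Longrightarrow> set es \<subseteq> Ed"
  by (induction rule: walk.induct) auto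

lemma walk_length_nonneg:
  fixes len :: "'e \<Rightarrow> real"
  shows "walk Ed s t u es w \<Longrightarrow> \<forall>e\<in>Ed. len e > 0 \<Longrightarrow> 0 \<le> sum_list (map len es)"
  by (induction rule: walk.induct) (auto intro: add_nonneg_nonneg less_imp_le)

definition via_dist where
  "via_dist Ed s t len p q = Inf {a + vdist Ed s t len u w + b | u a w b.
                                  (u, a) \<in> exits s t len p \<and> (w, b) \<in> exits s t len q}"

lemma exits_Inl [simp]: "exits s t len (Inl v) = {(v, 0)}"
  by (simp add: exits_def)

lemma exits_Inr [simp]: "exits s t len (Inr (e, x)) = {(s e, x), (t e, len e - x)}"
  by (simp add: exits_def)

lemma via_dist_eq_Inf_image:
  "via_dist Ed s t len p q =
     Inf ((\<lambda>((u, a), (w, b)). a + vdist Ed s t len u w + b) ` (exits s t len p \<times> exits s t len q))"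
  unfolding via_dist_def by (rule arg_cong[where f = Inf]) force

lemma finite_exits: "finite (exits s t len p)"
  by (auto simp: exits_def split: sum.splits prod.splits)

lemma exits_nonempty: "exits s t len p \<noteq> {}"
  by (auto simp: exits_def split: sum.splits prod.splits)

lemma via_dist_le:
  "(u, a) \<in> exits s t len p \<Longrightarrow> (w, b) \<in> exits s t len q \<Longrightarrow>
   via_dist Ed s t len p q \<le> a + vdist Ed s t len u w + b"
  unfolding via_dist_eq_Inf_image
  by (rule cInf_lower) (force, auto intro!: bdd_below_finite simp: finite_exits)

lemma via_dist_ge:
  "(\<And>u a w b. (u, a) \<in> exits s t len p \<Longrightarrow> (w, b) \<in> exits s t len q \<Longrightarrow>
      m \<le> a + vdist Ed s t len u w + b)
   \<Longrightarrow> m \<le> via_dist Ed s t len p q"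
  unfolding via_dist_eq_Inf_image by (rule cInf_greatest) (auto simp: exits_nonempty)

lemma via_dist_less:
  assumes "via_dist Ed s t len p q < m"
  shows "\<exists>u a w b. (u, a) \<in> exits s t len p \<and> (w, b) \<in> exits s t len q \<and>
                   a + vdist Ed s t len u w + b < m"
  using assms unfolding via_dist_eq_Inf_image
  by (subst (asm) cInf_less_iff) (auto intro!: bdd_below_finite simp: finite_exits exits_nonempty)

lemma gdist_eq_via_dist:
  "gdist Ed s t len p q = (case (p, q) of
      (Inr (e, x), Inr (e', y)) \<Rightarrow>
        if e = e' then min \<bar>x - y\<bar> (via_dist Ed s t len p q) else via_dist Ed s t len p q
    | _ \<Rightarrow> via_dist Ed s t len p q)"
  unfolding gdist_def via_dist_def Let_def by (simp split: sum.splits prod.splits)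

lemma gdist_Inl_left: "gdist Ed s t len (Inl v) q = via_dist Ed s t len (Inl v) q"
  by (simp add: gdist_eq_via_dist)

lemma gdist_Inl_right: "gdist Ed s t len p (Inl v) = via_dist Ed s t len p (Inl v)"
  by (simp add: gdist_eq_via_dist split: sum.splits prod.splits)

lemma gdist_Inr_other_edge:
  "e \<noteq> e' \<Longrightarrow> gdist Ed s t len (Inr (e, x)) (Inr (e', y)) = via_dist Ed s t len (Inr (e, x)) (Inr (e', y))"
  by (simp add: gdist_eq_via_dist)

lemma gdist_Inr_same_edge:
  "gdist Ed s t len (Inr (e, x)) (Inr (e, y)) = min \<bar>x - y\<bar> (via_dist Ed s t len (Inr (e, x)) (Inr (e, y)))"
  by (simp add: gdist_eq_via_dist)

lemma gdist_vertices: "gdist Ed s t len (Inl v) (Inl w) = vdist Ed s t len v w"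
proof -
  have "via_dist Ed s t len (Inl v) (Inl w) \<le> vdist Ed s t len v w"
    using via_dist_le[of v 0 s t len "Inl v" w 0 "Inl w" Ed] by simp
  moreover have "vdist Ed s t len v w \<le> via_dist Ed s t len (Inl v) (Inl w)"
    by (rule via_dist_ge) auto
  ultimately show ?thesis by (simp add: gdist_Inl_left)
qed

subsection \<open>Isometric embeddings of a metric graph\<close>

locale metric_graph_embedding =
  fixes V :: "'v set" and Ed :: "'e set" and src trg :: "'e \<Rightarrow> 'v" and len :: "'e \<Rightarrow> real"
    and \<iota> :: "'v + 'e \<times> real \<Rightarrow> 'x::metric_space"
  assumes graph: "metric_graph V Ed src trg len"
    and conn: "graph_connected V Ed src trg"
    and isom: "\<forall>p\<in>gpoints V Ed len. \<forall>q\<in>gpoints V Ed len.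
                 dist (\<iota> p) (\<iota> q) = gdist Ed src trg len p q"
begin

abbreviation "G \<equiv> gpoints V Ed len"
abbreviation "X \<equiv> closure (\<iota> ` G)"
abbreviation "vd \<equiv> vdist Ed src trg len"

definition edge_interior :: "('v + 'e \<times> real) set" where
  "edge_interior = {Inr (e, x) | e x. e \<in> Ed \<and> 0 < x \<and> x < len e}"

lemma len_pos: "e \<in> Ed \<Longrightarrow> len e > 0"
  using graph by (auto simp: metric_graph_def)

lemma src_in_V: "e \<in> Ed \<Longrightarrow> src e \<in> V"
  using graph by (auto simp: metric_graph_def)

lemma trg_in_V: "e \<in> Ed \<Longrightarrow> trg e \<in> V"
  using graph by (auto simp: metric_graph_def)

lemma finite_incident_edges: "v \<in> V \<Longrightarrow> finite {e\<in>Ed. src e = v \<or> trg e = v}"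
  using graph by (auto simp: metric_graph_def)

lemma Inl_in_gpoints [simp]: "Inl v \<in> G \<longleftrightarrow> v \<in> V"
  by (auto simp: gpoints_def)

lemma Inr_in_gpoints [simp]: "Inr (e, x) \<in> G \<longleftrightarrow> e \<in> Ed \<and> 0 < x \<and> x < len e"
  by (auto simp: gpoints_def)

lemma Inr_in_edge_interior [simp]: "Inr (e, x) \<in> edge_interior \<longleftrightarrow> e \<in> Ed \<and> 0 < x \<and> x < len e"
  by (auto simp: edge_interior_def)

lemma edge_interior_subset: "edge_interior \<subseteq> G - Inl ` Bd"
  by (auto simp: edge_interior_def)

lemma points_in_X: "p \<in> G \<Longrightarrow> \<iota> p \<in> X"
  by (auto intro: closure_subset[THEN subsetD])

lemma vdist_set_nonempty:
  "u \<in> V \<Longrightarrow> w \<in> V \<Longrightarrow> {sum_list (map len es) | es. walk Ed src trg u es w} \<noteq> {}"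
  using conn by (auto simp: graph_connected_def)

lemma vdist_set_bdd_below: "bdd_below {sum_list (map len es) | es. walk Ed src trg u es w}"
  using walk_length_nonneg[of Ed src trg u _ w len] len_pos walk_edges
  by (intro bdd_belowI[of _ 0]) auto

lemma vdist_nonneg: "u \<in> V \<Longrightarrow> w \<in> V \<Longrightarrow> 0 \<le> vd u w"
  unfolding vdist_def using walk_length_nonneg[of Ed src trg u _ w len] len_pos vdist_set_nonempty[of u w]
  by (intro cInf_greatest) auto

lemma vdist_le_walk: "walk Ed src trg u es w \<Longrightarrow> vd u w \<le> sum_list (map len es)"
  unfolding vdist_def by (intro cInf_lower vdist_set_bdd_below) auto

lemma vdist_self: "u \<in> V \<Longrightarrow> vd u u = 0"
  using vdist_le_walk[of u "[]" u] walk_Nil[of Ed src trg u] vdist_nonneg[of u u] by simp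

lemma vdist_edge_le: "e \<in> Ed \<Longrightarrow> vd (src e) (trg e) \<le> len e"
  using vdist_le_walk[OF walk_fwd[OF _ refl walk_Nil]] by fastforce

lemma vdist_ge_incident_len:
  assumes "u \<in> V" "w \<in> V" "u \<noteq> w" "\<And>e. e \<in> Ed \<Longrightarrow> src e = u \<or> trg e = u \<Longrightarrow> r \<le> len e"
  shows "r \<le> vd u w"
  unfolding vdist_def
proof (rule cInf_greatest)
  show "{sum_list (map len es) | es. walk Ed src trg u es w} \<noteq> {}"
    by (rule vdist_set_nonempty) fact+
  fix d assume "d \<in> {sum_list (map len es) | es. walk Ed src trg u es w}"
  then obtain es where es: "walk Ed src trg u es w" "d = sum_list (map len es)" by auto
  have "r \<le> sum_list (map len es)" using es(1)
  proof cases
    case walk_Nil then show ?thesis using assms by simp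
  next
    case (walk_fwd e es')
    then show ?thesis
      using assms(4)[of e] walk_length_nonneg[of Ed src trg "trg e" es' w len] len_pos by auto
  next
    case (walk_bwd e es')
    then show ?thesis
      using assms(4)[of e] walk_length_nonneg[of Ed src trg "src e" es' w len] len_pos by auto
  qed
  then show "r \<le> d" using es(2) by simp
qed

lemma exits_in_V: "p \<in> G \<Longrightarrow> (u, a) \<in> exits src trg len p \<Longrightarrow> u \<in> V \<and> 0 \<le> a"
  by (cases p) (auto simp: src_in_V trg_in_V)

lemma via_dist_edge_point_ge:
  assumes "e \<in> Ed" "0 < x" "x < len e" "q \<in> G"
  shows "min x (len e - x) \<le> via_dist Ed src trg len (Inr (e, x)) q"
    and "min x (len e - x) \<le> via_dist Ed src trg len q (Inr (e, x))"
proof -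
  show "min x (len e - x) \<le> via_dist Ed src trg len (Inr (e, x)) q"
  proof (rule via_dist_ge)
    fix u a w b assume "(u, a) \<in> exits src trg len (Inr (e, x))" "(w, b) \<in> exits src trg len q"
    moreover have "w \<in> V" "0 \<le> b" using exits_in_V[OF assms(4)] \<open>(w, b) \<in> _\<close> by auto
    ultimately show "min x (len e - x) \<le> a + vd u w + b"
      using vdist_nonneg[of u w] src_in_V trg_in_V assms by auto
  qed
  show "min x (len e - x) \<le> via_dist Ed src trg len q (Inr (e, x))"
  proof (rule via_dist_ge)
    fix u a w b assume "(u, a) \<in> exits src trg len q" "(w, b) \<in> exits src trg len (Inr (e, x))"
    moreover have "u \<in> V" "0 \<le> a" using exits_in_V[OF assms(4)] \<open>(u, a) \<in> _\<close> by auto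
    ultimately show "min x (len e - x) \<le> a + vd u w + b"
      using vdist_nonneg[of u w] src_in_V trg_in_V assms by auto
  qed
qed

lemma dist_edge_point_other_ge:
  assumes "e \<in> Ed" "0 < x" "x < len e" "q \<in> G" "\<And>y. q \<noteq> Inr (e, y)"
  shows "min x (len e - x) \<le> dist (\<iota> (Inr (e, x))) (\<iota> q)"
proof -
  have "gdist Ed src trg len (Inr (e, x)) q = via_dist Ed src trg len (Inr (e, x)) q"
  proof (cases q)
    case (Inl v) then show ?thesis by (simp add: gdist_Inl_right)
  next
    case (Inr r)
    then obtain e' y where "q = Inr (e', y)" by (cases r) auto
    moreover have "e' \<noteq> e" using assms(5) \<open>q = Inr (e', y)\<close> by blast
    ultimately show ?thesis by (simp add: gdist_Inr_other_edge)
  qed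
  then show ?thesis using via_dist_edge_point_ge(1)[OF assms(1-4)] isom assms by auto
qed

lemma dist_same_edge_le:
  "e \<in> Ed \<Longrightarrow> 0 < x \<Longrightarrow> x < len e \<Longrightarrow> 0 < y \<Longrightarrow> y < len e \<Longrightarrow>
   dist (\<iota> (Inr (e, x))) (\<iota> (Inr (e, y))) \<le> \<bar>x - y\<bar>"
  using isom gdist_Inr_same_edge[of Ed src trg len e x y] by auto

lemma dist_same_edge_ge:
  "e \<in> Ed \<Longrightarrow> 0 < x \<Longrightarrow> x < len e \<Longrightarrow> 0 < y \<Longrightarrow> y < len e \<Longrightarrow>
   min \<bar>x - y\<bar> (min x (len e - x)) \<le> dist (\<iota> (Inr (e, x))) (\<iota> (Inr (e, y)))"
  using isom gdist_Inr_same_edge[of Ed src trg len e x y] via_dist_edge_point_ge(1)[of e x "Inr (e, y)"]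
  by auto

lemma dist_edge_point_src_le:
  "e \<in> Ed \<Longrightarrow> 0 < x \<Longrightarrow> x < len e \<Longrightarrow> dist (\<iota> (Inr (e, x))) (\<iota> (Inl (src e))) \<le> x"
  using isom via_dist_le[of "src e" x src trg len "Inr (e, x)" "src e" 0 "Inl (src e)" Ed]
    vdist_self[of "src e"] src_in_V by (auto simp: gdist_Inl_right)

lemma dist_edge_point_trg_le:
  "e \<in> Ed \<Longrightarrow> 0 < x \<Longrightarrow> x < len e \<Longrightarrow> dist (\<iota> (Inr (e, x))) (\<iota> (Inl (trg e))) \<le> len e - x"
  using isom via_dist_le[of "trg e" "len e - x" src trg len "Inr (e, x)" "trg e" 0 "Inl (trg e)" Ed]
    vdist_self[of "trg e"] trg_in_V by (auto simp: gdist_Inl_right)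

lemma dist_vertices: "v \<in> V \<Longrightarrow> w \<in> V \<Longrightarrow> dist (\<iota> (Inl v)) (\<iota> (Inl w)) = vd v w"
  using isom gdist_vertices by auto

lemma dist_src_trg_le: "e \<in> Ed \<Longrightarrow> dist (\<iota> (Inl (src e))) (\<iota> (Inl (trg e))) \<le> len e"
  using dist_vertices vdist_edge_le src_in_V trg_in_V by auto

lemma dist_vertex_edge_point_less:
  assumes "v \<in> V" "e \<in> Ed" "0 < y" "y < len e" "dist (\<iota> (Inl v)) (\<iota> (Inr (e, y))) < \<rho>"
  shows "dist (\<iota> (Inl v)) (\<iota> (Inl (src e))) < \<rho> \<and> y < \<rho> \<or>
         dist (\<iota> (Inl v)) (\<iota> (Inl (trg e))) < \<rho> \<and> len e - y < \<rho>"
proof -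
  have "via_dist Ed src trg len (Inl v) (Inr (e, y)) < \<rho>"
    using assms isom by (auto simp: gdist_Inl_left)
  from via_dist_less[OF this] obtain u a w b where
    "(u, a) \<in> exits src trg len (Inl v)" "(w, b) \<in> exits src trg len (Inr (e, y))" "a + vd u w + b < \<rho>"
    by blast
  moreover have "0 \<le> vd v (src e)" "0 \<le> vd v (trg e)"
    using vdist_nonneg assms src_in_V trg_in_V by auto
  ultimately show ?thesis using dist_vertices[OF assms(1)] src_in_V trg_in_V assms by auto
qed

lemma gdist_vertex_edge_point_ge:
  "v \<in> V \<Longrightarrow> e \<in> Ed \<Longrightarrow> 0 < x \<Longrightarrow> x < len e \<Longrightarrow>
   min x (len e - x) \<le> gdist Ed src trg len (Inl v) (Inr (e, x))"
  using via_dist_edge_point_ge(2)[of e x "Inl v"] by (auto simp: gdist_Inl_left)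

lemma inj_on_edge_interior: "inj_on \<iota> edge_interior"
proof (rule inj_onI)
  fix p q assume "p \<in> edge_interior" "q \<in> edge_interior" "\<iota> p = \<iota> q"
  then obtain e x e' x' where p: "p = Inr (e, x)" "e \<in> Ed" "0 < x" "x < len e"
    and q: "q = Inr (e', x')" "e' \<in> Ed" "0 < x'" "x' < len e'" and eq: "\<iota> (Inr (e, x)) = \<iota> (Inr (e', x'))"
    by (auto simp: edge_interior_def)
  have "e = e'"
  proof (rule ccontr)
    assume "e \<noteq> e'"
    then have "min x (len e - x) \<le> 0"
      using dist_edge_point_other_ge[of e x "Inr (e', x')"] p q eq by auto
    then show False using p by auto
  qed
  moreover have "x = x'" using dist_same_edge_ge[of e x x'] p q eq \<open>e = e'\<close> by auto
  ultimately show "p = q" using p q by simp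
qed

definition edge_path :: "'e \<Rightarrow> real \<Rightarrow> 'x" where
  "edge_path e x = \<iota> (if x \<le> 0 then Inl (src e) else if len e \<le> x then Inl (trg e) else Inr (e, x))"

lemma edge_path_inner: "0 < x \<Longrightarrow> x < len e \<Longrightarrow> edge_path e x = \<iota> (Inr (e, x))"
  by (simp add: edge_path_def)

lemma edge_path_near_src: "e \<in> Ed \<Longrightarrow> x < len e \<Longrightarrow> edge_path e x \<in> \<iota> ` insert (Inl (src e)) edge_interior"
  by (auto simp: edge_path_def)

lemma edge_path_near_trg: "e \<in> Ed \<Longrightarrow> 0 < x \<Longrightarrow> edge_path e x \<in> \<iota> ` insert (Inl (trg e)) edge_interior"
  by (auto simp: edge_path_def)

lemma edge_path_in_points: "e \<in> Ed \<Longrightarrow> edge_path e x \<in> \<iota> ` G"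
  by (auto simp: edge_path_def src_in_V trg_in_V)

lemma edge_path_nonpos: "x \<le> 0 \<Longrightarrow> edge_path e x = \<iota> (Inl (src e))"
  by (simp add: edge_path_def)

lemma edge_path_ge_len: "e \<in> Ed \<Longrightarrow> len e \<le> x \<Longrightarrow> edge_path e x = \<iota> (Inl (trg e))"
  using len_pos[of e] by (simp add: edge_path_def)

lemma dist_edge_path_le:
  assumes "e \<in> Ed" shows "dist (edge_path e x) (edge_path e y) \<le> \<bar>x - y\<bar>"
proof -
  have "dist (edge_path e x) (edge_path e y) \<le> y - x" if "x \<le> y" for x y
  proof -
    consider "y \<le> 0" | "x \<le> 0" "0 < y" "y < len e" | "x \<le> 0" "len e \<le> y"
      | "0 < x" "y < len e" | "0 < x" "x < len e" "len e \<le> y" | "len e \<le> x"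
      using that by linarith
    then show ?thesis
    proof cases
      case 1
      then show ?thesis using that by (simp add: edge_path_nonpos)
    next
      case 2
      then show ?thesis using assms that dist_edge_point_src_le[of e y]
        by (simp add: edge_path_nonpos edge_path_inner dist_commute)
    next
      case 3
      then show ?thesis using assms that dist_src_trg_le[of e]
        by (simp add: edge_path_nonpos edge_path_ge_len)
    next
      case 4
      then show ?thesis using assms that dist_same_edge_le[of e x y]
        by (simp add: edge_path_inner)
    next
      case 5
      then show ?thesis using assms that dist_edge_point_trg_le[of e x]
        by (simp add: edge_path_inner edge_path_ge_len)
    next
      case 6
      then show ?thesis using assms that by (simp add: edge_path_ge_len)
    qed
  qed
  from this[of x y] this[of y x] show ?thesis
    by (cases "x \<le> y") (simp_all add: dist_commute)
qed

lemma continuous_on_edge_path: "e \<in> Ed \<Longrightarrow> continuous_on S (edge_path e)"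
  unfolding continuous_on_iff by (metis dist_real_def dist_edge_path_le order_le_less_trans)

lemma compact_edge_path_image: "e \<in> Ed \<Longrightarrow> compact (edge_path e ` {a..b})"
  by (intro compact_continuous_image continuous_on_edge_path compact_Icc)

lemma edge_point_neighbourhood:
  assumes "e \<in> Ed" "0 < x" "x < len e"
  shows "\<exists>\<rho>>0. \<forall>y\<in>X. dist y (\<iota> (Inr (e, x))) < \<rho> \<longrightarrow>
           (\<exists>x'. 0 < x' \<and> x' < len e \<and> y = \<iota> (Inr (e, x')) \<and> dist y (\<iota> (Inr (e, x))) = \<bar>x' - x\<bar>)"
proof -
  define m where "m = min x (len e - x)"
  define \<rho> where "\<rho> = m / 2"
  have \<rho>: "0 < \<rho>" "\<rho> < m" using assms by (auto simp: \<rho>_def m_def)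
  define K where "K = edge_path e ` {x - \<rho>..x + \<rho>}"
  have "closed K" unfolding K_def using compact_edge_path_image[OF assms(1)] compact_imp_closed by blast
  show ?thesis
  proof (rule exI[of _ \<rho>], intro conjI ballI impI \<rho>(1))
    fix y assume y: "y \<in> X" "dist y (\<iota> (Inr (e, x))) < \<rho>"
    have "y \<in> K"
    proof (rule closure_local_subset[OF y(1) \<open>closed K\<close>])
      show "0 < \<rho> - dist y (\<iota> (Inr (e, x)))" using y by simp
      fix z assume z: "z \<in> \<iota> ` G" "dist z y < \<rho> - dist y (\<iota> (Inr (e, x)))"
      then obtain q where q: "q \<in> G" "z = \<iota> q" by auto
      have dz: "dist (\<iota> (Inr (e, x))) z < \<rho>"
        using z(2) dist_triangle[of "\<iota> (Inr (e, x))" z y] by (simp add: dist_commute)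
      obtain x'' where x'': "q = Inr (e, x'')"
        using dist_edge_point_other_ge[OF assms q(1)] q(2) dz \<rho> by (force simp: m_def)
      then have "0 < x''" "x'' < len e" using q by auto
      then have "\<bar>x - x''\<bar> < \<rho>"
        using dist_same_edge_ge[OF assms] q x'' dz \<rho> by (fastforce simp: m_def min_def split: if_splits)
      then show "z \<in> K" unfolding K_def using q x'' edge_path_inner[OF \<open>0 < x''\<close> \<open>x'' < len e\<close>]
        by (intro image_eqI[of _ _ x'']) auto
    qed
    then obtain x' where x': "x' \<in> {x - \<rho>..x + \<rho>}" "y = edge_path e x'" by (auto simp: K_def)
    have "0 < x'" "x' < len e" using x' \<rho> by (auto simp: m_def)
    moreover have "dist y (\<iota> (Inr (e, x))) = \<bar>x' - x\<bar>"
      using dist_same_edge_le[OF assms \<open>0 < x'\<close> \<open>x' < len e\<close>]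
        dist_same_edge_ge[OF assms \<open>0 < x'\<close> \<open>x' < len e\<close>] x' edge_path_inner[OF \<open>0 < x'\<close> \<open>x' < len e\<close>] \<rho>
      by (auto simp: dist_commute m_def min_def abs_minus_commute split: if_splits)
    ultimately show "\<exists>x'. 0 < x' \<and> x' < len e \<and> y = \<iota> (Inr (e, x')) \<and> dist y (\<iota> (Inr (e, x))) = \<bar>x' - x\<bar>"
      using x' edge_path_inner by auto
  qed
qed

lemma near_vertex_cases:
  assumes v: "v \<in> V" and q: "q \<in> G" and near: "dist (\<iota> (Inl v)) (\<iota> q) < \<rho>"
    and short: "\<And>e. e \<in> Ed \<Longrightarrow> src e = v \<or> trg e = v \<Longrightarrow> \<rho> \<le> len e"
  shows "q = Inl v \<or> (\<exists>e x. q = Inr (e, x) \<and> e \<in> Ed \<and>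
           (src e = v \<and> 0 < x \<and> x < \<rho> \<or> trg e = v \<and> len e - \<rho> < x \<and> x < len e))"
proof -
  have far: "\<rho> \<le> dist (\<iota> (Inl v)) (\<iota> (Inl w))" if "w \<in> V" "w \<noteq> v" for w
    using vdist_ge_incident_len[OF v that(1)] that(2) short dist_vertices[OF v that(1)] by auto
  show ?thesis
  proof (cases q)
    case (Inl w)
    then show ?thesis using q near far[of w] by auto
  next
    case (Inr ex)
    then obtain e x where ex: "q = Inr (e, x)" by (cases ex) auto
    with q have "e \<in> Ed" "0 < x" "x < len e" by auto
    with dist_vertex_edge_point_less[OF v this near[unfolded ex]]
    show ?thesis using far[of "src e"] far[of "trg e"] src_in_V trg_in_V ex by force
  qed
qed

lemma vertex_neighbourhood:
  assumes v: "v \<in> V"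
  shows "\<exists>\<rho>>0. \<forall>y\<in>X. dist y (\<iota> (Inl v)) < \<rho> \<longrightarrow> y \<in> \<iota> ` insert (Inl v) edge_interior"
proof -
  define N where "N = {e\<in>Ed. src e = v \<or> trg e = v}"
  have "finite N" using finite_incident_edges[OF v] by (simp add: N_def)
  define \<rho> where "\<rho> = Min (insert 1 (len ` N)) / 2"
  have "Min (insert 1 (len ` N)) > 0" using \<open>finite N\<close> len_pos by (auto simp: N_def)
  then have \<rho>: "\<rho> > 0" by (simp add: \<rho>_def)
  have short: "\<rho> < len e" if "e \<in> Ed" "src e = v \<or> trg e = v" for e
  proof -
    have "Min (insert 1 (len ` N)) \<le> len e" using that \<open>finite N\<close> by (intro Min_le) (auto simp: N_def)
    with \<open>Min (insert 1 (len ` N)) > 0\<close> show ?thesis by (simp add: \<rho>_def)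
  qed
  define K where "K = insert (\<iota> (Inl v))
    ((\<Union>e\<in>{e\<in>N. src e = v}. edge_path e ` {0..\<rho>}) \<union> (\<Union>e\<in>{e\<in>N. trg e = v}. edge_path e ` {len e - \<rho>..len e}))"
  have "closed K" unfolding K_def
    by (intro compact_imp_closed compact_insert compact_Un compact_UN compact_edge_path_image)
       (auto simp: N_def intro: finite_subset[OF _ \<open>finite N\<close>])
  have K_sub: "K \<subseteq> \<iota> ` insert (Inl v) edge_interior"
  proof -
    have "edge_path e ` {0..\<rho>} \<subseteq> \<iota> ` insert (Inl v) edge_interior" if "e \<in> Ed" "src e = v" for e
      using edge_path_near_src[of e] short[of e] that by fastforce
    moreover have "edge_path e ` {len e - \<rho>..len e} \<subseteq> \<iota> ` insert (Inl v) edge_interior"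
      if "e \<in> Ed" "trg e = v" for e
      using edge_path_near_trg[of e] short[of e] that by fastforce
    ultimately show ?thesis unfolding K_def N_def by blast
  qed
  show ?thesis
  proof (intro exI[of _ \<rho>] conjI ballI impI \<rho>)
    fix y assume y: "y \<in> X" "dist y (\<iota> (Inl v)) < \<rho>"
    have "y \<in> K"
    proof (rule closure_local_subset[OF y(1) \<open>closed K\<close>])
      show "0 < \<rho> - dist y (\<iota> (Inl v))" using y by simp
      fix z assume z: "z \<in> \<iota> ` G" "dist z y < \<rho> - dist y (\<iota> (Inl v))"
      then obtain q where q: "q \<in> G" "z = \<iota> q" by auto
      have "dist (\<iota> (Inl v)) (\<iota> q) < \<rho>"
        using z(2) q(2) dist_triangle[of "\<iota> (Inl v)" z y] by (simp add: dist_commute)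
      with near_vertex_cases[OF v q(1)] short
      consider "q = Inl v"
        | e x where "q = Inr (e, x)" "e \<in> Ed" "src e = v" "0 < x" "x < \<rho>"
        | e x where "q = Inr (e, x)" "e \<in> Ed" "trg e = v" "len e - \<rho> < x" "x < len e"
        by (meson less_imp_le)
      then show "z \<in> K"
      proof cases
        case 1 then show ?thesis using q by (simp add: K_def)
      next
        case (2 e x)
        then have "z = edge_path e x" using q short[of e] by (simp add: edge_path_inner)
        then show ?thesis using 2 unfolding K_def N_def by auto
      next
        case (3 e x)
        then have "z = edge_path e x" using q \<rho> by (simp add: edge_path_inner)
        then show ?thesis using 3 unfolding K_def N_def by auto
      qed
    qed
    with K_sub show "y \<in> \<iota> ` insert (Inl v) edge_interior" by blast
  qed
qed

lemma nonboundary_neighbourhood: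
  assumes "p \<in> \<iota> ` (G - Inl ` Bd)"
  shows "\<exists>\<rho>>0. \<forall>y\<in>X. dist y p < \<rho> \<longrightarrow> y \<in> \<iota> ` (G - Inl ` Bd)"
proof -
  obtain q where q: "q \<in> G" "q \<notin> Inl ` Bd" "p = \<iota> q" using assms by auto
  show ?thesis
  proof (cases q)
    case (Inl v)
    then have "v \<in> V" "insert (Inl v) edge_interior \<subseteq> G - Inl ` Bd"
      using q edge_interior_subset by auto
    then show ?thesis using vertex_neighbourhood[of v] q Inl by blast
  next
    case (Inr ex)
    then obtain e x where ex: "q = Inr (e, x)" by (cases ex) auto
    with q have "e \<in> Ed" "0 < x" "x < len e" by auto
    then show ?thesis using edge_point_neighbourhood[of e x] q ex by fastforce
  qed
qed

lemma closed_boundary: "closed (X - \<iota> ` (G - Inl ` Bd))"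
proof -
  have "closure (X - \<iota> ` (G - Inl ` Bd)) \<subseteq> X - \<iota> ` (G - Inl ` Bd)"
  proof
    fix y assume y: "y \<in> closure (X - \<iota> ` (G - Inl ` Bd))"
    then have "y \<in> X" using closure_mono[of "X - \<iota> ` (G - Inl ` Bd)" X] by auto
    moreover have "y \<notin> \<iota> ` (G - Inl ` Bd)"
    proof
      assume "y \<in> \<iota> ` (G - Inl ` Bd)"
      then obtain \<rho> where "\<rho> > 0" "\<forall>z\<in>X. dist z y < \<rho> \<longrightarrow> z \<in> \<iota> ` (G - Inl ` Bd)"
        using nonboundary_neighbourhood by blast
      with y show False unfolding closure_approachable by blast
    qed
    ultimately show "y \<in> X - \<iota> ` (G - Inl ` Bd)" by simp
  qed
  then show ?thesis by (simp add: closure_subset_eq)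
qed

lemma closed_if_closedin_boundary: "closedin (top_of_set (X - \<iota> ` (G - Inl ` Bd))) S \<Longrightarrow> closed S"
  using closed_boundary closedin_closed_trans by blast

lemma in_edge_interior_if_not_boundary_or_vertex:
  "y \<in> X \<Longrightarrow> y \<notin> X - \<iota> ` (G - Inl ` Bd) \<Longrightarrow> y \<notin> \<iota> ` Inl ` V \<Longrightarrow> y \<in> \<iota> ` edge_interior"
  by (auto simp: gpoints_def edge_interior_def)

text \<open>Each point of \<open>K\<close> has a ball meeting no other edge; finitely many of them cover \<open>K\<close>.\<close>

lemma finite_edges_meeting_compact:
  assumes "compact K" "K \<subseteq> \<iota> ` edge_interior"
  shows "finite {e\<in>Ed. \<exists>x. 0 < x \<and> x < len e \<and> \<iota> (Inr (e, x)) \<in> K}"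
proof -
  have "\<forall>y\<in>K. \<exists>ex. fst ex \<in> Ed \<and> 0 < snd ex \<and> snd ex < len (fst ex) \<and> y = \<iota> (Inr ex)"
    using assms(2) by (force simp: edge_interior_def)
  then obtain pos where pos: "\<And>y. y \<in> K \<Longrightarrow> fst (pos y) \<in> Ed \<and> 0 < snd (pos y) \<and>
      snd (pos y) < len (fst (pos y)) \<and> y = \<iota> (Inr (pos y))"
    by metis
  define r where "r y = min (snd (pos y)) (len (fst (pos y)) - snd (pos y))" for y
  have "K \<subseteq> (\<Union>y\<in>K. ball y (r y))" using pos by (force simp: r_def)
  then obtain T where T: "T \<subseteq> K" "finite T" "K \<subseteq> (\<Union>y\<in>T. ball y (r y))"
    using compactE_image[OF assms(1), of K "\<lambda>y. ball y (r y)"] by auto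
  have "{e\<in>Ed. \<exists>x. 0 < x \<and> x < len e \<and> \<iota> (Inr (e, x)) \<in> K} \<subseteq> (\<lambda>y. fst (pos y)) ` T"
  proof safe
    fix e x assume x: "e \<in> Ed" "0 < x" "x < len e" "\<iota> (Inr (e, x)) \<in> K"
    then obtain p where p: "p \<in> T" "dist p (\<iota> (Inr (e, x))) < r p" using T by auto
    obtain e' x' where ex': "pos p = (e', x')" by fastforce
    have p': "e' \<in> Ed" "0 < x'" "x' < len e'" "p = \<iota> (Inr (e', x'))"
      using pos[of p] p(1) T(1) ex' by auto
    have "e' = e"
    proof (rule ccontr)
      assume "e' \<noteq> e"
      then have "min x' (len e' - x') \<le> dist p (\<iota> (Inr (e, x)))"
        using dist_edge_point_other_ge[of e' x' "Inr (e, x)"] p' x by auto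
      then show False using p(2) by (auto simp: r_def ex' min_def split: if_splits)
    qed
    then show "e \<in> (\<lambda>y. fst (pos y)) ` T" using p ex' by force
  qed
  then show ?thesis using T(2) finite_subset by blast
qed

end

subsection \<open>Smoothing the indicator of a superlevel set\<close>

locale threshold_smoothing =
  metric_graph_embedding V Ed src trg len \<iota>
  for V :: "'v set" and Ed :: "'e set" and src trg :: "'e \<Rightarrow> 'v" and len :: "'e \<Rightarrow> real"
    and \<iota> :: "'v + 'e \<times> real \<Rightarrow> 'x::metric_space" +
  fixes g :: "'x \<Rightarrow> real" and c :: real
  assumes continuous_g: "continuous_on X g"
    and compact_X: "compact X"
    and g_vertex_ne: "v \<in> V \<Longrightarrow> g (\<iota> (Inl v)) \<noteq> c"
    and level_set_in_edges: "{y \<in> X. g y = c} \<subseteq> \<iota> ` edge_interior"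
begin

definition above :: "'x \<Rightarrow> real" where
  "above y = (if c < g y then 1 else 0)"

definition crossing_edges :: "'e set" where
  "crossing_edges = {e \<in> Ed. \<exists>x. 0 < x \<and> x < len e \<and> g (\<iota> (Inr (e, x))) = c}"

lemma finite_crossing_edges: "finite crossing_edges"
proof -
  have "closed {y \<in> X. g y = c}"
    by (rule continuous_closed_preimage_constant[OF continuous_g]) simp
  from compact_Int_closed[OF compact_X this] have "compact {y \<in> X. g y = c}"
    by (simp add: Int_absorb1)
  from finite_edges_meeting_compact[OF this level_set_in_edges] show ?thesis
    by (rule finite_subset[rotated]) (auto simp: crossing_edges_def points_in_X)
qed

text \<open>The smooth step on \<open>e\<close> will be confined to \<open>[a, b]\<close>, so that near both end vertices it
  agrees with the indicator of \<open>{g > c}\<close>.\<close>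

definition transition_window :: "'e \<Rightarrow> real \<Rightarrow> real \<Rightarrow> bool" where
  "transition_window e a b \<longleftrightarrow> 0 < a \<and> a < b \<and> b < len e \<and>
     (\<forall>x\<in>{0<..a}. g (\<iota> (Inr (e, x))) \<noteq> c \<and> above (\<iota> (Inr (e, x))) = above (\<iota> (Inl (src e)))) \<and>
     (\<forall>x\<in>{b..<len e}. g (\<iota> (Inr (e, x))) \<noteq> c \<and> above (\<iota> (Inr (e, x))) = above (\<iota> (Inl (trg e))))"

lemma transition_window_exists:
  assumes e: "e \<in> Ed"
  shows "\<exists>a b. transition_window e a b"
proof -
  have cont: "continuous_on UNIV (\<lambda>x. g (edge_path e x))"
    by (rule continuous_on_compose2[OF continuous_g continuous_on_edge_path[OF e]])
       (use edge_path_in_points[OF e] closure_subset in blast)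
  have same_side: "g y \<noteq> c \<and> above y = above (\<iota> (Inl v))"
    if "\<bar>g y - g (\<iota> (Inl v))\<bar> < \<bar>g (\<iota> (Inl v)) - c\<bar>" for y v
    using that by (auto simp: above_def abs_real_def split: if_splits)
  have gap: "\<bar>g (\<iota> (Inl v)) - c\<bar> > 0" if "v \<in> V" for v
    using g_vertex_ne[OF that] by simp
  obtain d1 where d1: "d1 > 0" "\<And>x. dist x 0 < d1 \<Longrightarrow>
      dist (g (edge_path e x)) (g (edge_path e 0)) < \<bar>g (\<iota> (Inl (src e))) - c\<bar>"
    using cont gap[OF src_in_V[OF e]] unfolding continuous_on_iff by (metis UNIV_I)
  obtain d2 where d2: "d2 > 0" "\<And>x. dist x (len e) < d2 \<Longrightarrow>
      dist (g (edge_path e x)) (g (edge_path e (len e))) < \<bar>g (\<iota> (Inl (trg e))) - c\<bar>"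
    using cont gap[OF trg_in_V[OF e]] unfolding continuous_on_iff by (metis UNIV_I)
  define a where "a = min (d1 / 2) (len e / 3)"
  define b where "b = max (len e - d2 / 2) (2 * len e / 3)"
  have ab: "0 < a" "a < b" "b < len e"
    using d1(1) d2(1) len_pos[OF e] by (auto simp: a_def b_def)
  have "g (\<iota> (Inr (e, x))) \<noteq> c \<and> above (\<iota> (Inr (e, x))) = above (\<iota> (Inl (src e)))"
    if "0 < x" "x \<le> a" for x
  proof -
    have "x < len e" "dist x 0 < d1" using that d1(1) len_pos[OF e] by (auto simp: a_def dist_real_def)
    then show ?thesis using same_side d1(2)[of x] that
      by (simp add: edge_path_inner edge_path_nonpos dist_real_def)
  qed
  moreover have "g (\<iota> (Inr (e, x))) \<noteq> c \<and> above (\<iota> (Inr (e, x))) = above (\<iota> (Inl (trg e)))"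
    if "b \<le> x" "x < len e" for x
  proof -
    have "0 < x" "dist x (len e) < d2" using that d2(1) len_pos[OF e] by (auto simp: b_def dist_real_def)
    then show ?thesis using same_side d2(2)[of x] that
      by (simp add: edge_path_inner edge_path_ge_len[OF e] dist_real_def)
  qed
  ultimately have "transition_window e a b" using ab by (auto simp: transition_window_def)
  then show ?thesis by blast
qed

definition window :: "'e \<Rightarrow> real \<times> real" where
  "window e = (SOME (a, b). transition_window e a b)"

abbreviation "lo e \<equiv> fst (window e)"
abbreviation "hi e \<equiv> snd (window e)"

lemma window_is_transition_window:
  assumes "e \<in> Ed" shows "transition_window e (lo e) (hi e)"
proof -
  obtain a b where "transition_window e a b" using transition_window_exists[OF assms] by blast
  with someI[of "\<lambda>(a, b). transition_window e a b" "(a, b)"] show ?thesis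
    by (simp add: window_def case_prod_beta)
qed

lemma window_bounds: "e \<in> Ed \<Longrightarrow> 0 < lo e \<and> lo e < hi e \<and> hi e < len e"
  using window_is_transition_window by (simp add: transition_window_def)

lemma window_near_src:
  "e \<in> Ed \<Longrightarrow> 0 < x \<Longrightarrow> x \<le> lo e \<Longrightarrow>
   g (\<iota> (Inr (e, x))) \<noteq> c \<and> above (\<iota> (Inr (e, x))) = above (\<iota> (Inl (src e)))"
  using window_is_transition_window by (simp add: transition_window_def)

lemma window_near_trg:
  "e \<in> Ed \<Longrightarrow> hi e \<le> x \<Longrightarrow> x < len e \<Longrightarrow>
   g (\<iota> (Inr (e, x))) \<noteq> c \<and> above (\<iota> (Inr (e, x))) = above (\<iota> (Inl (trg e)))"
  using window_is_transition_window by (simp add: transition_window_def)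

definition transition :: "'e \<Rightarrow> real \<Rightarrow> real" where
  "transition e x = above (\<iota> (Inl (src e))) +
     (above (\<iota> (Inl (trg e))) - above (\<iota> (Inl (src e)))) * smooth_step ((x - lo e) / (hi e - lo e))"

lemma times_differentiable_transition: "times_differentiable k (transition e)"
proof -
  have affine: "transition e = (\<lambda>x. above (\<iota> (Inl (src e))) +
      (above (\<iota> (Inl (trg e))) - above (\<iota> (Inl (src e)))) *
      smooth_step ((1 / (hi e - lo e)) * x + (- lo e / (hi e - lo e))))"
    by (simp add: transition_def fun_eq_iff diff_divide_distrib)
  show ?thesis unfolding affine
    by (rule times_differentiable_add[OF times_differentiable_const times_differentiable_mult[OF
          times_differentiable_const times_differentiable_affine[OF times_differentiable_smooth_step]]])
qed

lemma transition_outside_window: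
  assumes "e \<in> Ed" "0 < x" "x < len e" "x \<le> lo e \<or> hi e \<le> x"
  shows "transition e x = above (\<iota> (Inr (e, x)))"
proof -
  have "lo e < hi e" using window_bounds[OF assms(1)] by simp
  from assms(4) show ?thesis
  proof
    assume "x \<le> lo e"
    then have "(x - lo e) / (hi e - lo e) \<le> 0" using \<open>lo e < hi e\<close> by (intro divide_nonpos_pos) auto
    then show ?thesis using window_near_src[OF assms(1,2) \<open>x \<le> lo e\<close>]
      by (simp add: transition_def smooth_step_nonpos)
  next
    assume "hi e \<le> x"
    then have "1 \<le> (x - lo e) / (hi e - lo e)" using \<open>lo e < hi e\<close> by (simp add: le_divide_eq_1)
    then show ?thesis using window_near_trg[OF assms(1) \<open>hi e \<le> x\<close> assms(3)]
      by (simp add: transition_def smooth_step_ge_1)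
  qed
qed

definition transition_zone :: "'x set" where
  "transition_zone = \<iota> ` {Inr (e, x) | e x. e \<in> crossing_edges \<and> lo e \<le> x \<and> x \<le> hi e}"

lemma crossing_edges_subset: "crossing_edges \<subseteq> Ed"
  by (auto simp: crossing_edges_def)

lemma closed_transition_zone: "closed transition_zone"
proof -
  have "transition_zone = (\<Union>e\<in>crossing_edges. edge_path e ` {lo e..hi e})"
  proof -
    have "\<iota> (Inr (e, x)) = edge_path e x" if "e \<in> crossing_edges" "lo e \<le> x" "x \<le> hi e" for e x
      using window_bounds[of e] crossing_edges_subset that by (auto simp: edge_path_inner)
    then show ?thesis unfolding transition_zone_def by (auto simp: image_iff) (metis atLeastAtMost_iff)+
  qed
  also have "closed \<dots>"
    using finite_crossing_edges crossing_edges_subset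
    by (intro compact_imp_closed compact_UN compact_edge_path_image) auto
  finally show ?thesis .
qed

lemma edge_point_in_transition_zone_iff:
  assumes "e \<in> Ed" "0 < x" "x < len e"
  shows "\<iota> (Inr (e, x)) \<in> transition_zone \<longleftrightarrow> e \<in> crossing_edges \<and> lo e \<le> x \<and> x \<le> hi e"
proof
  assume "\<iota> (Inr (e, x)) \<in> transition_zone"
  then obtain e' x' where e'x': "\<iota> (Inr (e, x)) = \<iota> (Inr (e', x'))" "e' \<in> crossing_edges" "lo e' \<le> x'" "x' \<le> hi e'"
    by (auto simp: transition_zone_def)
  moreover have "Inr (e', x') \<in> edge_interior"
    using e'x' window_bounds[of e'] crossing_edges_subset by auto
  ultimately show "e \<in> crossing_edges \<and> lo e \<le> x \<and> x \<le> hi e"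
    using inj_onD[OF inj_on_edge_interior] assms by fastforce
qed (auto simp: transition_zone_def)

lemma level_set_in_transition_zone:
  assumes "y \<in> X" "g y = c"
  shows "y \<in> transition_zone"
proof -
  obtain e x where ex: "e \<in> Ed" "0 < x" "x < len e" "y = \<iota> (Inr (e, x))"
    using level_set_in_edges assms by (auto simp: edge_interior_def)
  then have "e \<in> crossing_edges" using assms(2) by (auto simp: crossing_edges_def)
  moreover have "lo e \<le> x" "x \<le> hi e"
    using window_near_src[of e x] window_near_trg[of e x] ex assms(2) by force+
  ultimately show ?thesis using edge_point_in_transition_zone_iff ex by blast
qed

definition crossing_points :: "('v + 'e \<times> real) set" where
  "crossing_points = {Inr (e, x) | e x. e \<in> crossing_edges \<and> 0 < x \<and> x < len e}"

text \<open>\<open>inv_into\<close> recovers the edge coordinate of a crossing point; the \<open>Inl\<close> branch is never taken.\<close>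

definition smoothed :: "'x \<Rightarrow> real" where
  "smoothed y = (if y \<in> \<iota> ` crossing_points
                 then case_sum (\<lambda>_. 0) (case_prod transition) (inv_into edge_interior \<iota> y)
                 else above y)"

lemma crossing_points_subset: "crossing_points \<subseteq> edge_interior"
  using crossing_edges_subset by (auto simp: crossing_points_def)

lemma smoothed_crossing_edge:
  assumes "e \<in> crossing_edges" "0 < x" "x < len e"
  shows "smoothed (\<iota> (Inr (e, x))) = transition e x"
proof -
  have "Inr (e, x) \<in> crossing_points" using assms by (auto simp: crossing_points_def)
  then show ?thesis
    using crossing_points_subset by (auto simp: smoothed_def inv_into_f_f[OF inj_on_edge_interior])
qed

lemma smoothed_off_edges: "y \<notin> \<iota> ` edge_interior \<Longrightarrow> smoothed y = above y"
  using crossing_points_subset by (auto simp: smoothed_def)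

lemma smoothed_on_boundary: "y \<in> X - \<iota> ` (G - Inl ` Bd) \<Longrightarrow> smoothed y = above y"
  using image_mono[OF edge_interior_subset[of Bd], of \<iota>] by (auto intro: smoothed_off_edges)

lemma smoothed_outside_transition_zone:
  assumes "y \<notin> transition_zone"
  shows "smoothed y = above y"
proof (cases "y \<in> \<iota> ` crossing_points")
  case True
  then obtain e x where ex: "e \<in> crossing_edges" "0 < x" "x < len e" "y = \<iota> (Inr (e, x))"
    by (auto simp: crossing_points_def)
  then have "x \<le> lo e \<or> hi e \<le> x"
    using assms edge_point_in_transition_zone_iff[of e x] crossing_edges_subset by auto
  then show ?thesis
    using ex smoothed_crossing_edge transition_outside_window crossing_edges_subset by auto
next
  case False
  then show ?thesis by (simp add: smoothed_def)
qed

lemma smoothed_locally_constant: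
  assumes p: "p \<in> X" "p \<notin> transition_zone"
  shows "\<exists>d>0. \<forall>y\<in>X. dist y p < d \<longrightarrow> smoothed y = smoothed p"
proof -
  have "\<bar>g p - c\<bar> > 0" using p level_set_in_transition_zone by fastforce
  then obtain d1 where d1: "d1 > 0" "\<And>y. y \<in> X \<Longrightarrow> dist y p < d1 \<Longrightarrow> dist (g y) (g p) < \<bar>g p - c\<bar>"
    using continuous_g p(1) unfolding continuous_on_iff by metis
  obtain d2 where d2: "d2 > 0" "ball p d2 \<subseteq> - transition_zone"
    using closed_transition_zone p(2) unfolding closed_def open_contains_ball by blast
  have "smoothed y = smoothed p" if "y \<in> X" "dist y p < min d1 d2" for y
  proof -
    have "y \<notin> transition_zone" using that d2 by (auto simp: dist_commute)
    moreover have "above y = above p"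
      using d1(2)[of y] that by (auto simp: above_def dist_real_def abs_real_def split: if_splits)
    ultimately show ?thesis using smoothed_outside_transition_zone p(2) by simp
  qed
  then show ?thesis using d1(1) d2(1) by (intro exI[of _ "min d1 d2"]) auto
qed

lemma continuous_on_smoothed: "continuous_on X smoothed"
  unfolding continuous_on_iff
proof (intro ballI allI impI)
  fix p and \<epsilon> :: real assume p: "p \<in> X" and \<epsilon>: "0 < \<epsilon>"
  show "\<exists>d>0. \<forall>y\<in>X. dist y p < d \<longrightarrow> dist (smoothed y) (smoothed p) < \<epsilon>"
  proof (cases "p \<in> transition_zone")
    case True
    then obtain e x0 where e: "e \<in> crossing_edges" "lo e \<le> x0" "x0 \<le> hi e" "p = \<iota> (Inr (e, x0))"
      by (auto simp: transition_zone_def)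
    have "e \<in> Ed" "0 < x0" "x0 < len e"
      using e window_bounds[of e] crossing_edges_subset by auto
    then obtain \<rho> where \<rho>: "\<rho> > 0" "\<forall>y\<in>X. dist y p < \<rho> \<longrightarrow>
        (\<exists>x'. 0 < x' \<and> x' < len e \<and> y = \<iota> (Inr (e, x')) \<and> dist y p = \<bar>x' - x0\<bar>)"
      using edge_point_neighbourhood e(4) by blast
    obtain d1 where d1: "d1 > 0" "\<And>x'. dist x' x0 < d1 \<Longrightarrow> dist (transition e x') (transition e x0) < \<epsilon>"
      using times_differentiable_isCont[OF times_differentiable_transition[of "Suc 0" e]] \<epsilon>
      unfolding continuous_at_eps_delta by blast
    have "dist (smoothed y) (smoothed p) < \<epsilon>" if "y \<in> X" "dist y p < min \<rho> d1" for y
    proof -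
      have "dist y p < \<rho>" using that by simp
      then obtain x' where x': "0 < x'" "x' < len e" "y = \<iota> (Inr (e, x'))" "dist y p = \<bar>x' - x0\<bar>"
        using \<rho>(2) \<open>y \<in> X\<close> by blast
      then show ?thesis
        using d1(2)[of x'] that smoothed_crossing_edge[OF e(1)] \<open>0 < x0\<close> \<open>x0 < len e\<close> e(4)
        by (simp add: dist_real_def)
    qed
    then show ?thesis using \<rho>(1) d1(1) by (intro exI[of _ "min \<rho> d1"]) auto
  next
    case False
    then obtain d where "d > 0" "\<forall>y\<in>X. dist y p < d \<longrightarrow> smoothed y = smoothed p"
      using smoothed_locally_constant[OF p] by blast
    then show ?thesis using \<epsilon> by (intro exI[of _ d]) auto
  qed
qed

lemma edge_fun_smoothed_locally_constant:
  assumes "e \<in> Ed" "0 < x" "x < len e" "\<iota> (Inr (e, x)) \<notin> transition_zone"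
  shows "\<exists>U. open U \<and> x \<in> U \<and> (\<forall>y\<in>U. edge_fun smoothed \<iota> e y = edge_fun smoothed \<iota> e x)"
proof -
  obtain d where d: "d > 0" "\<forall>y\<in>X. dist y (\<iota> (Inr (e, x))) < d \<longrightarrow> smoothed y = smoothed (\<iota> (Inr (e, x)))"
    using smoothed_locally_constant[OF points_in_X assms(4)] assms by auto
  define U where "U = ball x d \<inter> {0<..<len e}"
  have "edge_fun smoothed \<iota> e y = edge_fun smoothed \<iota> e x" if "y \<in> U" for y
  proof -
    have y: "0 < y" "y < len e" "\<bar>y - x\<bar> < d" using that by (auto simp: U_def dist_real_def)
    then have "dist (\<iota> (Inr (e, y))) (\<iota> (Inr (e, x))) < d"
      using dist_same_edge_le[OF assms(1) y(1,2) assms(2,3)] by linarith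
    then show ?thesis using d(2) points_in_X[of "Inr (e, y)"] y assms(1) by (simp add: edge_fun_def)
  qed
  moreover have "open U" "x \<in> U" using d(1) assms by (auto simp: U_def)
  ultimately show ?thesis by blast
qed

lemma deriv_edge_fun_smoothed_outside_transition_zone:
  assumes "e \<in> Ed" "0 < x" "x < len e" "\<iota> (Inr (e, x)) \<notin> transition_zone"
  shows "deriv (edge_fun smoothed \<iota> e) x = 0"
proof -
  obtain U where "open U" "x \<in> U" "\<forall>y\<in>U. edge_fun smoothed \<iota> e y = edge_fun smoothed \<iota> e x"
    using edge_fun_smoothed_locally_constant[OF assms] by blast
  then show ?thesis
    using deriv_eq_0_if_constant_on_open[of U x "edge_fun smoothed \<iota> e" "edge_fun smoothed \<iota> e x"] by blast
qed

lemma edge_fun_smoothed_smooth: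
  assumes "e \<in> Ed" "0 < x" "x < len e"
  shows "(deriv ^^ k) (edge_fun smoothed \<iota> e) differentiable (at x)"
proof (cases "e \<in> crossing_edges")
  case True
  show ?thesis
  proof (rule funpow_deriv_differentiable_if_eq_on_open[of "{0<..<len e}" x _ "transition e"])
    show "edge_fun smoothed \<iota> e y = transition e y" if "y \<in> {0<..<len e}" for y
      using smoothed_crossing_edge[OF True] that by (simp add: edge_fun_def)
  qed (use assms times_differentiable_transition in auto)
next
  case False
  then have "\<iota> (Inr (e, x)) \<notin> transition_zone" using edge_point_in_transition_zone_iff[OF assms] by simp
  then obtain U where U: "open U" "x \<in> U" "\<forall>y\<in>U. edge_fun smoothed \<iota> e y = edge_fun smoothed \<iota> e x"
    using edge_fun_smoothed_locally_constant[OF assms] by blast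
  show ?thesis
  proof (rule funpow_deriv_differentiable_if_eq_on_open[of U x _ "\<lambda>_. edge_fun smoothed \<iota> e x"])
    show "edge_fun smoothed \<iota> e y = edge_fun smoothed \<iota> e x" if "y \<in> U" for y
      using U(3) that by blast
  qed (use U(1,2) times_differentiable_const in auto)
qed

lemma class_A_smoothed: "class_A V Ed src trg len \<iota> X smoothed"
proof -
  define \<epsilon> where "\<epsilon> = Min (insert 1 ((\<lambda>e. min (lo e) (len e - hi e)) ` crossing_edges))"
  have "\<epsilon> > 0"
    using finite_crossing_edges window_bounds crossing_edges_subset by (auto simp: \<epsilon>_def)
  have \<epsilon>_le: "\<epsilon> \<le> min (lo e) (len e - hi e)" if "e \<in> crossing_edges" for e
    unfolding \<epsilon>_def using finite_crossing_edges that by (intro Min_le) auto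
  have flat_near_vertex: "deriv (edge_fun smoothed \<iota> e) x = 0"
    if "v \<in> V" "e \<in> Ed" "x \<in> {0<..<len e}" "gdist Ed src trg len (Inl v) (Inr (e, x)) < \<epsilon>" for v e x
  proof -
    have x: "0 < x" "x < len e" using that(3) by auto
    have "x < \<epsilon> \<or> len e - x < \<epsilon>"
      using gdist_vertex_edge_point_ge[OF that(1,2) x] that(4) by linarith
    then have "\<iota> (Inr (e, x)) \<notin> transition_zone"
      using edge_point_in_transition_zone_iff[OF that(2) x] \<epsilon>_le[of e] by auto
    then show ?thesis using deriv_edge_fun_smoothed_outside_transition_zone[OF that(2) x] by blast
  qed
  have flat_off_crossing: "deriv (edge_fun smoothed \<iota> e) x = 0"
    if "e \<in> Ed - crossing_edges" "x \<in> {0<..<len e}" for e x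
    using deriv_edge_fun_smoothed_outside_transition_zone edge_point_in_transition_zone_iff that by auto
  show ?thesis
    unfolding class_A_def
  proof (intro conjI)
    show "continuous_on X smoothed" by (rule continuous_on_smoothed)
    show "\<forall>e\<in>Ed. \<forall>k. \<forall>x\<in>{0<..<len e}. (deriv ^^ k) (edge_fun smoothed \<iota> e) differentiable (at x)"
      using edge_fun_smoothed_smooth by auto
    show "\<exists>F. finite F \<and> F \<subseteq> Ed \<and> (\<forall>e\<in>Ed - F. \<forall>x\<in>{0<..<len e}. deriv (edge_fun smoothed \<iota> e) x = 0)"
      using finite_crossing_edges crossing_edges_subset flat_off_crossing by blast
    show "\<forall>v\<in>V. \<exists>\<epsilon>>0. \<forall>e\<in>Ed. \<forall>x\<in>{0<..<len e}.
            gdist Ed src trg len (Inl v) (Inr (e, x)) < \<epsilon> \<longrightarrow> deriv (edge_fun smoothed \<iota> e) x = 0"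
      using flat_near_vertex \<open>\<epsilon> > 0\<close> by blast
  qed
qed

end

theorem lemma2p6:
  fixes V :: "'v set" and Ed :: "'e set" and s t :: "'e \<Rightarrow> 'v" and len :: "'e \<Rightarrow> real"
    and Bd :: "'v set"
    and \<iota> :: "'v + 'e \<times> real \<Rightarrow> 'x::metric_space"
    and E :: "'x set"
  assumes graph: "metric_graph V Ed s t len"
    and conn: "graph_connected V Ed s t"
    and Bd_sub: "Bd \<subseteq> V"
    and Bd_deg1: "{v \<in> V. degree Ed s t v = 1} \<subseteq> Bd"
    and isom: "\<forall>p\<in>gpoints V Ed len. \<forall>q\<in>gpoints V Ed len.
                 dist (\<iota> p) (\<iota> q) = gdist Ed s t len p q"
    and compl: "complete (closure (\<iota> ` gpoints V Ed len))"
    and cpt: "compact (closure (\<iota> ` gpoints V Ed len))"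
    and tdisc: "totally_disconnected
                  (closure (\<iota> ` gpoints V Ed len) - \<iota> ` (gpoints V Ed len - Inl ` Bd))"
    and E_open: "openin (top_of_set
                  (closure (\<iota> ` gpoints V Ed len) - \<iota> ` (gpoints V Ed len - Inl ` Bd))) E"
    and E_closed: "closedin (top_of_set
                  (closure (\<iota> ` gpoints V Ed len) - \<iota> ` (gpoints V Ed len - Inl ` Bd))) E"
    and E_ne: "E \<noteq> {}"
    and Ec_ne: "(closure (\<iota> ` gpoints V Ed len) - \<iota> ` (gpoints V Ed len - Inl ` Bd)) - E \<noteq> {}"
  shows "\<exists>\<phi>. class_A V Ed s t len \<iota> (closure (\<iota> ` gpoints V Ed len)) \<phi> \<and>
             (\<forall>x\<in>E. \<phi> x = 1) \<and>
             (\<forall>x\<in>(closure (\<iota> ` gpoints V Ed len) - \<iota> ` (gpoints V Ed len - Inl ` Bd)) - E. \<phi> x = 0)"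
proof -
  interpret metric_graph_embedding V Ed s t len \<iota>
    using graph conn isom by unfold_locales
  define B where "B = X - \<iota> ` (G - Inl ` Bd)"
  have "closedin (top_of_set B) (B - E)" using E_open by (simp add: B_def openin_closedin_eq)
  then have "closed E" "closed (B - E)"
    using E_closed closed_if_closedin_boundary by (simp_all add: B_def)
  moreover have "B - E \<noteq> {}" using Ec_ne by (simp add: B_def)
  ultimately obtain g :: "'x \<Rightarrow> real" where g: "continuous_on UNIV g" "\<forall>y\<in>E. g y = 1" "\<forall>y\<in>B - E. g y = 0"
    using metric_separating_function[OF _ _ E_ne _ Diff_disjoint] by blast
  have "countable V" using graph by (simp add: metric_graph_def)
  then obtain c where c: "0 < c" "c < 1" "c \<notin> (\<lambda>v. g (\<iota> (Inl v))) ` V"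
    using real_interval_avoids_countable[OF countable_image zero_less_one] by blast
  have "{y \<in> X. g y = c} \<subseteq> \<iota> ` edge_interior"
  proof (intro subsetI in_edge_interior_if_not_boundary_or_vertex)
    fix y assume y: "y \<in> {y \<in> X. g y = c}"
    then show "y \<in> X" "y \<notin> \<iota> ` Inl ` V" using c(3) by auto
    have "g y \<noteq> 1" "g y \<noteq> 0" using y c(1,2) by auto
    then show "y \<notin> X - \<iota> ` (G - Inl ` Bd)" using g(2,3) by (auto simp: B_def)
  qed
  moreover have "continuous_on X g" using g(1) continuous_on_subset by blast
  moreover have "\<And>v. v \<in> V \<Longrightarrow> g (\<iota> (Inl v)) \<noteq> c" using c(3) by auto
  ultimately interpret threshold_smoothing V Ed s t len \<iota> g c
    using cpt by unfold_locales blast+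
  have "E \<subseteq> B" using closedin_imp_subset[OF E_closed] by (simp add: B_def)
  show ?thesis
  proof (intro exI[of _ smoothed] conjI ballI)
    show "class_A V Ed s t len \<iota> X smoothed" by (rule class_A_smoothed)
  next
    fix y assume "y \<in> E"
    then show "smoothed y = 1" using smoothed_on_boundary \<open>E \<subseteq> B\<close> g(2) c(2) by (auto simp: B_def above_def)
  next
    fix y assume "y \<in> X - \<iota> ` (G - Inl ` Bd) - E"
    then show "smoothed y = 0" using smoothed_on_boundary g(3) c(1) by (auto simp: B_def above_def)
  qed
qed

end
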